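(* Let $\mathcal A=\{G\in\mathcal G:\ \overline G\text{ is Abelian}\}$. The sets $\mathcal D=\{G\in\mathcal A:\ \overline G\text{ is divisible}\}$, $\mathcal T=\{G\in\mathcal A:\ \overline G\text{ is a torsion group}\}$ and $\mathcal F=\{G\in\mathcal A:\ \text{every finite Abelian group can be embedded into }\overline G\}$ are $G_\delta$ in $\mathcal A$.
   Context: Let $\mathbb N=\{1,2,3,\dots\}$. Equip $\mathbb N^{\mathbb N\times\mathbb N}$ with the product topology of the discrete topology on $\mathbb N$. Let $\mathcal G$ be the subspace consisting of those $A\in\mathbb N^{\mathbb N\times\mathbb N}$ that are the multiplication table of a group on the underlying set $\mathbb N$ whose identity element is $1$. For $G\in\mathcal G$, $\overline G$ denotes the group on $\mathbb N$ with multiplication table $G$. $\mathcal A$ carries the subspace topology. *)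

theory Defs
  imports "HOL-Analysis.Analysis" "HOL-Algebra.Algebra"
begin

definition Npos :: "nat set" where "Npos = {n. 1 \<le> n}"

definition tableSpace :: "(nat \<times> nat \<Rightarrow> nat) topology" where
  "tableSpace = product_topology (\<lambda>_. discrete_topology Npos) (Npos \<times> Npos)"

definition tbl :: "(nat \<times> nat \<Rightarrow> nat) \<Rightarrow> nat monoid" where
  "tbl M = \<lparr>carrier = Npos, mult = (\<lambda>x y. M (x, y)), one = 1\<rparr>"

definition calG :: "(nat \<times> nat \<Rightarrow> nat) set" where
  "calG = {M \<in> topspace tableSpace. group (tbl M)}"

definition calA :: "(nat \<times> nat \<Rightarrow> nat) set" where
  "calA = {M \<in> calG. comm_group (tbl M)}"

definition divisible_group :: "('a, 'b) monoid_scheme \<Rightarrow> bool" where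
  "divisible_group G \<longleftrightarrow>
     (\<forall>x \<in> carrier G. \<forall>n::nat. n \<ge> 1 \<longrightarrow> (\<exists>y \<in> carrier G. y [^]\<^bsub>G\<^esub> n = x))"

definition torsion_group :: "('a, 'b) monoid_scheme \<Rightarrow> bool" where
  "torsion_group G \<longleftrightarrow>
     (\<forall>x \<in> carrier G. \<exists>n::nat. n \<ge> 1 \<and> x [^]\<^bsub>G\<^esub> n = \<one>\<^bsub>G\<^esub>)"

text \<open>Every finite Abelian group embeds into G. Finite groups are represented
  (up to isomorphism) with carrier a finite set of naturals.\<close>
definition embeds_all_finite_abelian :: "('a, 'b) monoid_scheme \<Rightarrow> bool" where
  "embeds_all_finite_abelian G \<longleftrightarrow>
     (\<forall>H :: nat monoid. comm_group H \<and> finite (carrier H) \<longrightarrow>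
        (\<exists>h. h \<in> hom H G \<and> inj_on h (carrier H)))"

definition calD where "calD = {M \<in> calA. divisible_group (tbl M)}"
definition calT where "calT = {M \<in> calA. torsion_group (tbl M)}"
definition calF where "calF = {M \<in> calA. embeds_all_finite_abelian (tbl M)}"

end

theory Submission
  imports Defs
begin

text \<open>Each of the three properties is a countable conjunction of conditions of the form
  ``some finite configuration occurs in the table'': a root \<open>y\<close> with \<open>y\<^sup>n = x\<close>, an
  exponent \<open>n \<ge> 1\<close> with \<open>x\<^sup>n = 1\<close>, or an injective homomorphic copy of a finite Abelian
  group \<open>H\<close>. An occurrence is witnessed by finitely many entries of the table, so each
  condition defines an open set. For the last property the conditions are countably many
  because the one for \<open>H\<close> only depends on the finite carrier of \<open>H\<close> and its table on it.\<close>

lemma openin_discrete_product_topologyI: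
  assumes S_sub: "S \<subseteq> topspace (product_topology (\<lambda>_. discrete_topology A) I)"
    and finitely_determined: "\<And>f. f \<in> S \<Longrightarrow> \<exists>K. finite K \<and>
          (\<forall>g \<in> topspace (product_topology (\<lambda>_. discrete_topology A) I).
             (\<forall>k\<in>K. g k = f k) \<longrightarrow> g \<in> S)"
  shows "openin (product_topology (\<lambda>_. discrete_topology A) I) S"
  unfolding openin_subopen[of _ S]
proof
  fix f assume "f \<in> S"
  then obtain K where "finite K"
    and K: "\<forall>g \<in> topspace (product_topology (\<lambda>_. discrete_topology A) I).
              (\<forall>k\<in>K. g k = f k) \<longrightarrow> g \<in> S"
    using finitely_determined by blast
  have f: "f \<in> (\<Pi>\<^sub>E i\<in>I. A)"
    using \<open>f \<in> S\<close> S_sub by auto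
  define C where "C = (\<Pi>\<^sub>E i\<in>I. if i \<in> K \<inter> I then {f i} else A)"
  have "openin (product_topology (\<lambda>_. discrete_topology A) I) C"
    unfolding C_def
    by (rule product_topology_basis) (use f in \<open>auto intro: finite_subset[OF _ \<open>finite K\<close>]\<close>)
  moreover have "f \<in> C"
    using f by (auto simp: C_def)
  moreover have "C \<subseteq> S"
  proof
    fix g assume g: "g \<in> C"
    then have "g \<in> (\<Pi>\<^sub>E i\<in>I. A)"
      using f by (auto simp: C_def PiE_iff split: if_splits)
    moreover have "g k = f k" if "k \<in> K" for k
      using g f that by (cases "k \<in> I") (force simp: C_def PiE_def extensional_def Pi_iff)+
    ultimately show "g \<in> S"
      using K by simp
  qed
  ultimately show "\<exists>C. openin (product_topology (\<lambda>_. discrete_topology A) I) C \<and> f \<in> C \<and> C \<subseteq> S"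
    by blast
qed

lemma gdelta_in_subtopology_Int_INT:
  assumes "S \<subseteq> topspace T" "countable I" "\<And>i. i \<in> I \<Longrightarrow> openin T (U i)"
  shows "gdelta_in (subtopology T S) (S \<inter> (\<Inter>i\<in>I. U i))"
proof -
  have "gdelta_in T (\<Inter>(insert (topspace T) (U ` I)))"
    using assms(2,3) by (intro gdelta_in_Inter) (auto intro: open_imp_gdelta_in)
  moreover have "S \<inter> (\<Inter>i\<in>I. U i) = \<Inter>(insert (topspace T) (U ` I)) \<inter> S"
    using assms(1) by blast
  ultimately show ?thesis
    unfolding gdelta_in_subtopology by blast
qed

lemma carrier_tbl [simp]: "carrier (tbl M) = Npos"
  and one_tbl [simp]: "\<one>\<^bsub>tbl M\<^esub> = 1"
  and mult_tbl [simp]: "x \<otimes>\<^bsub>tbl M\<^esub> y = M (x, y)"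
  by (simp_all add: tbl_def)

lemma calA_subset_topspace: "calA \<subseteq> topspace tableSpace"
  by (auto simp: calA_def calG_def)

lemma tbl_nat_pow_cong:
  assumes "\<And>k. k < n \<Longrightarrow> M' (y [^]\<^bsub>tbl M\<^esub> k, y) = M (y [^]\<^bsub>tbl M\<^esub> k, y)"
  shows "y [^]\<^bsub>tbl M'\<^esub> n = y [^]\<^bsub>tbl M\<^esub> (n::nat)"
  using assms by (induction n) simp_all

lemma openin_tbl_nat_pow_eq:
  "openin tableSpace {M \<in> topspace tableSpace. y [^]\<^bsub>tbl M\<^esub> (n::nat) = z}"
proof (rule openin_discrete_product_topologyI[of _ Npos "Npos \<times> Npos", folded tableSpace_def],
    goal_cases)
  case (2 M)
  let ?K = "(\<lambda>k. (y [^]\<^bsub>tbl M\<^esub> k, y)) ` {..<n}"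
  have "y [^]\<^bsub>tbl M'\<^esub> n = z" if "\<forall>k\<in>?K. M' k = M k" for M'
    using 2 that by (subst tbl_nat_pow_cong[where M = M]) auto
  then show ?case
    by (intro exI[of _ ?K]) auto
qed auto

definition embedding_tables :: "nat set \<Rightarrow> (nat \<times> nat \<Rightarrow> nat) \<Rightarrow> (nat \<times> nat \<Rightarrow> nat) set" where
  "embedding_tables A f = {M \<in> topspace tableSpace. \<exists>h \<in> A \<rightarrow> Npos.
     inj_on h A \<and> (\<forall>x\<in>A. \<forall>y\<in>A. h (f (x, y)) = M (h x, h y))}"

lemma openin_embedding_tables:
  assumes "finite A"
  shows "openin tableSpace (embedding_tables A f)"
proof (rule openin_discrete_product_topologyI[of _ Npos "Npos \<times> Npos", folded tableSpace_def],
    goal_cases)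
  case 1
  show ?case by (auto simp: embedding_tables_def)
next
  case (2 M)
  then obtain h where h: "h \<in> A \<rightarrow> Npos" "inj_on h A"
    and hom: "\<forall>x\<in>A. \<forall>y\<in>A. h (f (x, y)) = M (h x, h y)"
    by (auto simp: embedding_tables_def)
  let ?K = "(\<lambda>(x, y). (h x, h y)) ` (A \<times> A)"
  have "M' \<in> embedding_tables A f"
    if "M' \<in> topspace tableSpace" "\<forall>k\<in>?K. M' k = M k" for M'
    using h hom that unfolding embedding_tables_def by auto
  then show ?case
    using assms by (intro exI[of _ ?K]) auto
qed

lemma gdelta_in_calD: "gdelta_in (subtopology tableSpace calA) calD"
proof -
  have calD_eq: "calD = calA \<inter> (\<Inter>(x, n) \<in> Npos \<times> Npos.
                   \<Union>y\<in>Npos. {M \<in> topspace tableSpace. y [^]\<^bsub>tbl M\<^esub> n = x})"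
    using calA_subset_topspace by (auto simp: calD_def divisible_group_def Npos_def)
  show ?thesis
    unfolding calD_eq
    by (rule gdelta_in_subtopology_Int_INT)
      (auto simp: calA_subset_topspace intro: openin_tbl_nat_pow_eq)
qed

lemma gdelta_in_calT: "gdelta_in (subtopology tableSpace calA) calT"
proof -
  have calT_eq: "calT = calA \<inter> (\<Inter>x \<in> Npos.
                   \<Union>n\<in>Npos. {M \<in> topspace tableSpace. x [^]\<^bsub>tbl M\<^esub> n = 1})"
    using calA_subset_topspace by (auto simp: calT_def torsion_group_def Npos_def)
  show ?thesis
    unfolding calT_eq
    by (rule gdelta_in_subtopology_Int_INT)
      (auto simp: calA_subset_topspace intro: openin_tbl_nat_pow_eq)
qed

lemma embedding_tables_restrict:
  "embedding_tables A (restrict f (A \<times> A)) = embedding_tables A f"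
  by (simp add: embedding_tables_def)

lemma embedding_tables_carrier_iff:
  "M \<in> embedding_tables (carrier H) (\<lambda>(x, y). x \<otimes>\<^bsub>H\<^esub> y) \<longleftrightarrow>
     M \<in> topspace tableSpace \<and> (\<exists>h. h \<in> hom H (tbl M) \<and> inj_on h (carrier H))"
  by (auto simp: embedding_tables_def hom_def)

lemma countable_finite_binops: "countable (SIGMA A:{A :: 'a::countable set. finite A}. A \<times> A \<rightarrow>\<^sub>E A)"
  by (rule countable_SIGMA) (auto intro: countable_Collect_finite countable_finite finite_PiE)

lemma gdelta_in_calF: "gdelta_in (subtopology tableSpace calA) calF"
proof -
  define finite_abelian :: "nat monoid set" where
    "finite_abelian = {H. comm_group H \<and> finite (carrier H)}"
  define table :: "nat monoid \<Rightarrow> nat set \<times> (nat \<times> nat \<Rightarrow> nat)" where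
    "table H = (carrier H, restrict (\<lambda>(x, y). x \<otimes>\<^bsub>H\<^esub> y) (carrier H \<times> carrier H))" for H
  have "table H \<in> (SIGMA A:{A. finite A}. A \<times> A \<rightarrow>\<^sub>E A)" if "H \<in> finite_abelian" for H
  proof -
    have "monoid H"
      using that comm_group.axioms(2) group.is_monoid unfolding finite_abelian_def by blast
    then show ?thesis
      using that by (auto simp: table_def finite_abelian_def restrict_PiE_iff intro: monoid.m_closed)
  qed
  then have countable_tables: "countable (table ` finite_abelian)"
    by (intro countable_subset[OF _ countable_finite_binops]) blast
  have calF_eq: "calF = calA \<inter> (\<Inter>(A, f) \<in> table ` finite_abelian. embedding_tables A f)"
    by (auto simp: calF_def embeds_all_finite_abelian_def finite_abelian_def table_def
        embedding_tables_restrict embedding_tables_carrier_iff dest: subsetD[OF calA_subset_topspace])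
  have "openin tableSpace (embedding_tables A f)" if "(A, f) \<in> table ` finite_abelian" for A f
    using that by (auto simp: table_def finite_abelian_def intro: openin_embedding_tables)
  then show ?thesis
    unfolding calF_eq
    by (intro gdelta_in_subtopology_Int_INT calA_subset_topspace countable_tables) auto
qed

theorem proposition8p5:
  shows "gdelta_in (subtopology tableSpace calA) calD
       \<and> gdelta_in (subtopology tableSpace calA) calT
       \<and> gdelta_in (subtopology tableSpace calA) calF"
  using gdelta_in_calD gdelta_in_calT gdelta_in_calF by blast

end
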